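(* Let $L:C(\Sigma_A^+)\to C(\Sigma_A^+)$ be a positive linear operator (i.e. $Lg\ge0$ whenever $g\ge0$) such that $L(\mathcal{P}_\delta)\subset\mathcal{P}_{\delta'}$ for some $0<\delta'<\delta$. Then there exists $\kappa<1$ such that $\Theta(Lf,Lg)\le\kappa\,\Theta(f,g)$ for all $f,g\in\mathcal{P}_\delta$.
   Context: $\Sigma_A^+$ is a one-sided subshift of finite type (compact space). For $\delta>0$, $\mathcal{P}_\delta=\{g\in C(\Sigma_A^+):g>0,\ \sup_{x,y}g(x)/g(y)\le e^\delta\}$. For strictly positive continuous $f,g$, the Hilbert projective metric is $\Theta(f,g)=\log\dfrac{\sup_x f(x)/g(x)}{\inf_x f(x)/g(x)}$. *)

theory Defs
  imports "HOL-Analysis.Analysis"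
begin

text \<open>The space nat => nat carries the product topology (nat discrete),
  so this is the usual compact topology of the shift space.\<close>
definition SFT :: "nat \<Rightarrow> (nat \<Rightarrow> nat \<Rightarrow> bool) \<Rightarrow> (nat \<Rightarrow> nat) set" where
  "SFT k A = {x. \<forall>n. x n < k \<and> A (x n) (x (Suc n))}"

definition Pcone :: "(nat \<Rightarrow> nat) set \<Rightarrow> real \<Rightarrow> ((nat \<Rightarrow> nat) \<Rightarrow> real) set" where
  "Pcone S \<delta> = {g. continuous_on S g \<and> (\<forall>x\<in>S. 0 < g x) \<and>
                    (\<forall>x\<in>S. \<forall>y\<in>S. g x / g y \<le> exp \<delta>)}"

definition Theta :: "(nat \<Rightarrow> nat) set \<Rightarrow> ((nat \<Rightarrow> nat) \<Rightarrow> real) \<Rightarrow> ((nat \<Rightarrow> nat) \<Rightarrow> real) \<Rightarrow> real" where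
  "Theta S f g = ln ((SUP x\<in>S. f x / g x) / (INF x\<in>S. f x / g x))"

end

theory Submission
  imports Defs
begin

text \<open>Write \<open>f = \<alpha> g + (\<beta> - \<alpha>) \<psi> g\<close> with \<open>\<alpha>, \<beta>\<close> the infimum and supremum of \<open>f / g\<close> and
  \<open>0 \<le> \<psi> \<le> 1\<close>. The test functions \<open>1 + c \<psi>\<close> and \<open>1 + c (1 - \<psi>)\<close>, with \<open>c = exp \<delta> - 1\<close>, lie
  in \<open>P\<^sub>\<delta>\<close>, so their images lie in \<open>P\<^sub>\<delta>'\<close>; comparing these images at two points bounds
  the oscillation of \<open>L \<psi> / L 1\<close> by \<open>1 - \<eta>\<close> for an explicit \<open>\<eta> > 0\<close>. As \<open>g \<in> P\<^sub>\<delta>\<close> is within a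
  factor \<open>exp \<delta>\<close> of a constant, the oscillation of \<open>L (\<psi> g) / L g\<close> is at most
  \<open>1 - exp (-2\<delta>) \<eta>\<close>. Hence \<open>L f / L g\<close> varies by a factor at most \<open>1 + (r - 1)(1 - exp (-2\<delta>) \<eta>)\<close>
  with \<open>r = \<beta> / \<alpha> \<le> exp (2\<delta>)\<close>, and concavity of \<open>ln\<close> turns this into
  \<open>\<Theta>(L f, L g) \<le> (1 - exp (-4\<delta>) \<eta>) \<Theta>(f, g)\<close>.\<close>

lemma ratio_SUP_INF_bounds:
  fixes \<phi> :: "'a \<Rightarrow> real"
  assumes ne: "S \<noteq> {}" and pos: "\<And>y. y \<in> S \<Longrightarrow> 0 < \<phi> y"
    and le: "\<And>y z. y \<in> S \<Longrightarrow> z \<in> S \<Longrightarrow> \<phi> y \<le> R * \<phi> z"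
  shows "bdd_above (\<phi> ` S)" "bdd_below (\<phi> ` S)" "0 < (INF y\<in>S. \<phi> y)"
    "(SUP y\<in>S. \<phi> y) \<le> R * (INF y\<in>S. \<phi> y)"
proof -
  obtain x0 where x0: "x0 \<in> S" using ne by auto
  have R: "1 \<le> R" using le[OF x0 x0] pos[OF x0] by simp
  have lower: "\<phi> y / R \<le> (INF z\<in>S. \<phi> z)" if "y \<in> S" for y
    using ne le[OF that] R by (intro cINF_greatest) (auto simp: divide_le_eq mult.commute)
  show "bdd_above (\<phi> ` S)" using le x0 by (intro bdd_aboveI2[where M = "R * \<phi> x0"]) auto
  show "bdd_below (\<phi> ` S)" using pos by (intro bdd_belowI2[where m = 0]) (auto intro: less_imp_le)
  have "0 < \<phi> x0 / R" using pos[OF x0] R by simp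
  then show "0 < (INF y\<in>S. \<phi> y)" using lower[OF x0] by linarith
  show "(SUP y\<in>S. \<phi> y) \<le> R * (INF y\<in>S. \<phi> y)"
    using ne lower R by (intro cSUP_least) (auto simp: divide_le_eq mult.commute)
qed

lemma Theta_le_ln:
  assumes ne: "S \<noteq> {}" and f: "\<And>y. y \<in> S \<Longrightarrow> 0 < f y" and g: "\<And>y. y \<in> S \<Longrightarrow> 0 < g y"
    and le: "\<And>y z. y \<in> S \<Longrightarrow> z \<in> S \<Longrightarrow> f y / g y \<le> K * (f z / g z)"
  shows "Theta S f g \<le> ln K"
proof -
  let ?sup = "SUP y\<in>S. f y / g y" and ?inf = "INF y\<in>S. f y / g y"
  have pos: "\<And>y. y \<in> S \<Longrightarrow> 0 < f y / g y" using f g by simp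
  note bounds = ratio_SUP_INF_bounds[of S "\<lambda>y. f y / g y" K, OF ne pos le]
  obtain x0 where x0: "x0 \<in> S" using ne by auto
  have "0 < f x0 / g x0" using pos[OF x0] .
  also have "\<dots> \<le> ?sup" by (rule cSUP_upper[OF x0 bounds(1)])
  finally have "0 < ?sup" .
  moreover have "?sup / ?inf \<le> K" using bounds(3,4) by (simp add: divide_le_eq)
  ultimately show ?thesis unfolding Theta_def using bounds(3) by (intro ln_mono) auto
qed

lemma Pcone_continuous: "g \<in> Pcone S d \<Longrightarrow> continuous_on S g"
  unfolding Pcone_def by auto

lemma Pcone_pos: "g \<in> Pcone S d \<Longrightarrow> y \<in> S \<Longrightarrow> 0 < g y"
  unfolding Pcone_def by auto

lemma Pcone_le:
  assumes "g \<in> Pcone S d" "y \<in> S" "z \<in> S"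
  shows "g y \<le> exp d * g z"
  using assms Pcone_pos[OF assms(1,3)] unfolding Pcone_def by (auto simp: divide_le_eq)

lemma Pcone_ratio_le:
  assumes f: "f \<in> Pcone S d" and g: "g \<in> Pcone S d" and y: "y \<in> S" and z: "z \<in> S"
  shows "f y / g y \<le> exp (2 * d) * (f z / g z)"
proof -
  have "f y * g z \<le> (exp d * f z) * (exp d * g y)"
    using Pcone_le[OF f y z] Pcone_le[OF g z y] Pcone_pos[OF f y] Pcone_pos[OF g z]
    by (intro mult_mono) auto
  also have "\<dots> = exp (2 * d) * f z * g y" by (simp add: mult_exp_exp)
  finally show ?thesis using Pcone_pos[OF g y] Pcone_pos[OF g z] by (simp add: field_simps)
qed

lemma Pcone_of_bounds:
  assumes "continuous_on S h" "0 < a" "\<And>y. y \<in> S \<Longrightarrow> a \<le> h y \<and> h y \<le> exp d * a"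
  shows "h \<in> Pcone S d"
proof -
  have "h y \<le> exp d * h z" if "y \<in> S" "z \<in> S" for y z
    using assms(3)[OF that(1)] assms(3)[OF that(2)] by (meson exp_ge_zero mult_left_mono order_trans)
  moreover have "0 < h y" if "y \<in> S" for y using assms(2) assms(3)[OF that] by linarith
  ultimately show ?thesis using assms(1) unfolding Pcone_def by (auto simp: divide_le_eq)
qed

lemma gap_le_of_product_ineq:
  fixes c E u u' :: real
  assumes c: "0 < c" and E: "1 \<le> E" "E < 1 + c" and u: "u \<le> 1" "0 \<le> u'"
    and prod: "(1 + c*u) * (1 + c - c*u') \<le> E\<^sup>2 * ((1 + c*u') * (1 + c - c*u))"
  shows "u - u' \<le> 1 - (1 + c - E) / (c * (1 + E))"
proof (rule ccontr)
  define \<eta> where "\<eta> = (1 + c - E) / (c * (1 + E))"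
  have balance: "1 + c - c*\<eta> = E * (1 + c*\<eta>)"
  proof -
    have "c * (1 + E) \<noteq> 0" using c E by simp
    then show ?thesis unfolding \<eta>_def by (simp add: field_simps)
  qed
  assume "\<not> ?thesis"
  hence gap: "1 - \<eta> < u - u'" by (simp add: \<eta>_def)
  have hu: "1 - \<eta> < u" and hu': "u' < \<eta>" using gap u by linarith+
  have cu: "c*(1 - \<eta>) < c*u" "c*u' < c*\<eta>" "c*u \<le> c*1"
    using mult_strict_left_mono[OF hu c] mult_strict_left_mono[OF hu' c] mult_left_mono[OF u(1)] c
    by auto
  have "0 \<le> \<eta>" using c E unfolding \<eta>_def by simp
  have "(E * (1 + c*\<eta>)) * (E * (1 + c*\<eta>)) < (1 + c*u) * (1 + c - c*u')"
  proof (rule mult_strict_mono)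
    show "E * (1 + c*\<eta>) < 1 + c*u"
      unfolding balance[symmetric] using cu by (simp add: algebra_simps)
    show "E * (1 + c*\<eta>) < 1 + c - c*u'"
      unfolding balance[symmetric] using cu by (simp add: algebra_simps)
    show "0 \<le> E * (1 + c*\<eta>)" using E c \<open>0 \<le> \<eta>\<close> by simp
    then show "0 < 1 + c*u" using \<open>E * (1 + c*\<eta>) < 1 + c*u\<close> by linarith
  qed
  also have "\<dots> \<le> E\<^sup>2 * ((1 + c*u') * (1 + c - c*u))" by (rule prod)
  also have "\<dots> \<le> E\<^sup>2 * ((1 + c*\<eta>) * (1 + c*\<eta>))"
  proof -
    have "1 + c*u' \<le> 1 + c*\<eta>" "1 + c - c*u \<le> 1 + c*\<eta>" "0 \<le> 1 + c - c*u"
      using cu by (auto simp: algebra_simps)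
    then show ?thesis using \<open>0 \<le> \<eta>\<close> c u by (intro mult_left_mono mult_mono) auto
  qed
  finally show False by (simp add: power2_eq_square algebra_simps)
qed

lemma ratio_gap_le_of_cone_ineqs:
  fixes a a' p p' c E :: real
  assumes c: "0 < c" and E: "1 \<le> E" "E < 1 + c"
    and a: "0 < a" "0 < a'" and p: "0 \<le> p" "p \<le> a" "0 \<le> p'" "p' \<le> a'"
    and ineq1: "a + c*p \<le> E * (a' + c*p')"
    and ineq2: "(1 + c)*a' - c*p' \<le> E * ((1 + c)*a - c*p)"
  shows "p/a - p'/a' \<le> 1 - (1 + c - E) / (c * (1 + E))"
proof (rule gap_le_of_product_ineq[OF c E])
  define u u' where "u = p/a" and "u' = p'/a'"
  have prod: "(a + c*p) * ((1 + c)*a' - c*p') \<le> (E * (a' + c*p')) * (E * ((1 + c)*a - c*p))"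
  proof (rule mult_mono[OF ineq1 ineq2])
    have "c*p' \<le> c*a'" using c p by simp
    then show "0 \<le> (1 + c)*a' - c*p'" using a by (simp add: algebra_simps)
    have "0 \<le> c*p" using c p by simp
    then show "0 \<le> E * (a' + c*p')" using ineq1 a by linarith
  qed
  have eqs: "a + c*p = a * (1 + c*u)" "(1 + c)*a' - c*p' = a' * (1 + c - c*u')"
    "a' + c*p' = a' * (1 + c*u')" "(1 + c)*a - c*p = a * (1 + c - c*u)"
    using a by (simp_all add: u_def u'_def field_simps)
  from prod have "(a*a') * ((1 + c*u) * (1 + c - c*u')) \<le> (a*a') * (E\<^sup>2 * ((1 + c*u') * (1 + c - c*u)))"
    unfolding eqs by (simp add: power2_eq_square ac_simps)
  then show "(1 + c*u) * (1 + c - c*u') \<le> E\<^sup>2 * ((1 + c*u') * (1 + c - c*u))"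
    using a by simp
  show "p/a \<le> 1" "0 \<le> p'/a'" using a p by auto
qed

lemma ln_contract_le:
  fixes r R e :: real
  assumes r: "1 \<le> r" "r \<le> R" and e: "0 < e" "e \<le> 1"
  shows "ln (1 + (r - 1) * (1 - e)) \<le> (1 - e/R) * ln r"
proof -
  define K where "K = 1 + (r - 1) * (1 - e)"
  have "0 \<le> (r - 1) * (1 - e)" using r e by simp
  then have K: "1 \<le> K" "r - K = (r - 1) * e" by (simp_all add: K_def algebra_simps)
  have "ln K = ln r - ln (r/K)" using K r by (simp add: ln_div)
  also have "\<dots> \<le> ln r - (1 - K/r)"
    using ln_le_minus_one[of "K/r"] ln_div[of K r] ln_div[of r K] K r by simp
  also have "1 - K/r = (r - 1) * e / r" using K r by (simp add: field_simps)
  also have "(r - 1) * e / R \<le> (r - 1) * e / r" using r e by (intro divide_left_mono) auto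
  hence "ln r - (r - 1) * e / r \<le> ln r - (r - 1) * e / R" by simp
  also have "(r - 1) * e / R \<ge> e / R * ln r"
    using ln_le_minus_one[of r] r e by (simp add: divide_right_mono mult_left_mono mult.commute)
  hence "ln r - (r - 1) * e / R \<le> (1 - e/R) * ln r" by (simp add: algebra_simps)
  finally show ?thesis unfolding K_def .
qed

locale positive_linear_operator =
  fixes S :: "'a::topological_space set" and L :: "('a \<Rightarrow> real) \<Rightarrow> 'a \<Rightarrow> real"
  assumes L_linear: "\<And>f g a b. continuous_on S f \<Longrightarrow> continuous_on S g \<Longrightarrow>
               \<forall>x\<in>S. L (\<lambda>y. a * f y + b * g y) x = a * L f x + b * L g x"
    and L_nonneg: "\<And>g. continuous_on S g \<Longrightarrow> (\<forall>x\<in>S. 0 \<le> g x) \<Longrightarrow> \<forall>x\<in>S. 0 \<le> L g x"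
begin

lemma L_mono:
  assumes f: "continuous_on S f" and g: "continuous_on S g"
    and le: "\<And>y. y \<in> S \<Longrightarrow> f y \<le> g y" and x: "x \<in> S"
  shows "L f x \<le> L g x"
proof -
  have "L (\<lambda>y. 1 * g y + (-1) * f y) x = L g x - L f x" using L_linear[OF g f, of 1 "-1"] x by simp
  moreover have "0 \<le> L (\<lambda>y. 1 * g y + (-1) * f y) x"
    using L_nonneg[of "\<lambda>y. 1 * g y + (-1) * f y"] f g le x by (auto intro!: continuous_intros)
  ultimately show ?thesis by simp
qed

lemma L_lincomb:
  assumes f: "continuous_on S f" and g: "continuous_on S g" and h: "continuous_on S h"
    and eq: "\<And>y. y \<in> S \<Longrightarrow> h y = a * f y + b * g y" and x: "x \<in> S"
  shows "L h x = a * L f x + b * L g x"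
proof -
  have comb: "continuous_on S (\<lambda>y. a * f y + b * g y)" by (intro continuous_intros f g)
  have "L h x = L (\<lambda>y. a * f y + b * g y) x"
    using L_mono[OF h comb _ x] L_mono[OF comb h _ x] eq by (simp add: order_antisym)
  then show ?thesis using L_linear[OF f g] x by simp
qed

lemma L_ratio_ge:
  assumes f: "continuous_on S f" and g: "continuous_on S g"
    and le: "\<And>y. y \<in> S \<Longrightarrow> \<alpha> * g y \<le> f y" and z: "z \<in> S" and Lg: "0 < L g z"
  shows "\<alpha> \<le> L f z / L g z"
proof -
  have "L (\<lambda>y. \<alpha> * g y) z \<le> L f z" using le z by (intro L_mono continuous_intros f g)
  moreover have "L (\<lambda>y. \<alpha> * g y) z = \<alpha> * L g z"
    using L_lincomb[OF g g _ _ z, of "\<lambda>y. \<alpha> * g y" \<alpha> 0] g by (simp add: continuous_intros)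
  ultimately show ?thesis using Lg by (simp add: le_divide_eq)
qed

lemma L_weighted_ratio_ge:
  assumes \<phi>: "continuous_on S \<phi>" "\<And>y. y \<in> S \<Longrightarrow> 0 \<le> \<phi> y"
    and g: "continuous_on S g" "\<And>y. y \<in> S \<Longrightarrow> m \<le> g y \<and> g y \<le> M"
    and m: "0 < m" and z: "z \<in> S" and Lg: "0 < L g z"
  shows "m / M * (L \<phi> z / L (\<lambda>_. 1) z) \<le> L (\<lambda>y. \<phi> y * g y) z / L g z"
proof -
  have one: "continuous_on S (\<lambda>_. 1 :: real)" by simp
  have \<phi>g: "continuous_on S (\<lambda>y. \<phi> y * g y)" by (intro continuous_intros \<phi> g)
  have "m * \<phi> y \<le> \<phi> y * g y" if "y \<in> S" for y
    using mult_left_mono[of m "g y" "\<phi> y"] \<phi>(2)[OF that] g(2)[OF that] by (simp add: mult.commute)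
  then have "L (\<lambda>y. m * \<phi> y) z \<le> L (\<lambda>y. \<phi> y * g y) z"
    using z by (intro L_mono continuous_intros \<phi> \<phi>g)
  moreover have "L (\<lambda>y. m * \<phi> y) z = m * L \<phi> z"
    using L_lincomb[OF \<phi>(1) \<phi>(1) _ _ z, of "\<lambda>y. m * \<phi> y" m 0] \<phi> by (simp add: continuous_intros)
  ultimately have lower: "m * L \<phi> z \<le> L (\<lambda>y. \<phi> y * g y) z" by simp
  have "L g z \<le> L (\<lambda>_. M * 1) z" using g z by (intro L_mono) auto
  moreover have "L (\<lambda>_. M * 1) z = M * L (\<lambda>_. 1) z"
    using L_lincomb[OF one one _ _ z, of "\<lambda>_. M * 1" M 0] by simp
  ultimately have upper: "L g z \<le> M * L (\<lambda>_. 1) z" by simp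
  have "0 \<le> L \<phi> z" using L_nonneg[OF \<phi>(1)] \<phi>(2) z by blast
  have "m / M * (L \<phi> z / L (\<lambda>_. 1) z) = m * L \<phi> z / (M * L (\<lambda>_. 1) z)" by simp
  also have "\<dots> \<le> m * L \<phi> z / L g z"
    using upper Lg m \<open>0 \<le> L \<phi> z\<close> by (intro divide_left_mono) auto
  also have "\<dots> \<le> L (\<lambda>y. \<phi> y * g y) z / L g z" using lower Lg by (simp add: divide_right_mono)
  finally show ?thesis .
qed

end

locale Pcone_mapping_operator = positive_linear_operator S L
  for S :: "(nat \<Rightarrow> nat) set" and L +
  fixes \<delta> \<delta>' :: real
  assumes delta: "0 < \<delta>'" "\<delta>' < \<delta>"
    and maps: "\<And>g. g \<in> Pcone S \<delta> \<Longrightarrow> L g \<in> Pcone S \<delta>'"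
begin

definition eta :: real
  where "eta = (exp \<delta> - exp \<delta>') / ((exp \<delta> - 1) * (1 + exp \<delta>'))"

lemma eta_pos: "0 < eta"
proof -
  have "exp \<delta>' < exp \<delta>" "1 < exp \<delta>'" using delta by auto
  then show ?thesis unfolding eta_def by (simp add: add_pos_pos)
qed

lemma eta_le_1: "eta \<le> 1"
proof -
  have exp: "exp \<delta>' < exp \<delta>" "1 < exp \<delta>'" using delta by auto
  then have "exp \<delta> - exp \<delta>' \<le> (exp \<delta> - 1) * 1" by simp
  also have "\<dots> \<le> (exp \<delta> - 1) * (1 + exp \<delta>')" using exp by (intro mult_left_mono) auto
  finally show ?thesis using exp unfolding eta_def by (simp add: divide_le_eq add_pos_pos)
qed

lemma L_const_pos: "x \<in> S \<Longrightarrow> 0 < L (\<lambda>_. 1) x"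
  using Pcone_pos[OF maps] Pcone_of_bounds[of S "\<lambda>_. 1" 1 \<delta>] delta by simp

lemma unit_ratio_gap:
  assumes \<psi>: "continuous_on S \<psi>" "\<And>y. y \<in> S \<Longrightarrow> 0 \<le> \<psi> y \<and> \<psi> y \<le> 1"
    and x: "x \<in> S" "x' \<in> S"
  shows "L \<psi> x / L (\<lambda>_. 1) x - L \<psi> x' / L (\<lambda>_. 1) x' \<le> 1 - eta"
proof -
  define c E where "c = exp \<delta> - 1" and "E = exp \<delta>'"
  have c: "0 < c" and E: "1 \<le> E" "E < 1 + c" using delta by (auto simp: c_def E_def)
  have exp_eq: "exp \<delta> = 1 + c" by (simp add: c_def)
  have one: "continuous_on S (\<lambda>_. 1 :: real)" by simp
  have bounds: "0 \<le> c * \<psi> y" "c * \<psi> y \<le> c" if "y \<in> S" for y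
    using \<psi>(2)[OF that] c by (auto simp: mult_left_le)
  have q1: "(\<lambda>y. 1 + c * \<psi> y) \<in> Pcone S \<delta>" and q2: "(\<lambda>y. (1 + c) - c * \<psi> y) \<in> Pcone S \<delta>"
    using bounds by (auto intro!: Pcone_of_bounds[where a = 1] continuous_intros \<psi> simp: exp_eq)
  have Lq1: "L (\<lambda>y. 1 + c * \<psi> y) w = L (\<lambda>_. 1) w + c * L \<psi> w" if "w \<in> S" for w
    using L_lincomb[OF one \<psi>(1) Pcone_continuous[OF q1] _ that, of 1 c] by simp
  have Lq2: "L (\<lambda>y. (1 + c) - c * \<psi> y) w = (1 + c) * L (\<lambda>_. 1) w - c * L \<psi> w" if "w \<in> S" for w
    using L_lincomb[OF one \<psi>(1) Pcone_continuous[OF q2] _ that, of "1 + c" "-c"] by simp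
  have L\<psi>: "0 \<le> L \<psi> w" "L \<psi> w \<le> L (\<lambda>_. 1) w" if "w \<in> S" for w
    using L_nonneg[OF \<psi>(1)] \<psi>(2) L_mono[OF \<psi>(1) one _ that] that by auto
  have "L (\<lambda>_. 1) x + c * L \<psi> x \<le> E * (L (\<lambda>_. 1) x' + c * L \<psi> x')"
    using Pcone_le[OF maps[OF q1] x] by (simp add: Lq1 x E_def)
  moreover have "(1 + c) * L (\<lambda>_. 1) x' - c * L \<psi> x' \<le> E * ((1 + c) * L (\<lambda>_. 1) x - c * L \<psi> x)"
    using Pcone_le[OF maps[OF q2] x(2,1)] by (simp add: Lq2 x E_def)
  ultimately have "L \<psi> x / L (\<lambda>_. 1) x - L \<psi> x' / L (\<lambda>_. 1) x' \<le> 1 - (1 + c - E) / (c * (1 + E))"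
    using L_const_pos L\<psi> x by (intro ratio_gap_le_of_cone_ineqs[OF c E]) auto
  also have "(1 + c - E) / (c * (1 + E)) = eta" by (simp add: eta_def c_def E_def)
  finally show ?thesis .
qed

lemma weighted_ratio_gap:
  assumes g: "g \<in> Pcone S \<delta>"
    and \<psi>: "continuous_on S \<psi>" "\<And>y. y \<in> S \<Longrightarrow> 0 \<le> \<psi> y \<and> \<psi> y \<le> 1"
    and x: "x \<in> S" "x' \<in> S"
  shows "L (\<lambda>y. \<psi> y * g y) x / L g x - L (\<lambda>y. \<psi> y * g y) x' / L g x'
         \<le> 1 - exp (-2*\<delta>) * eta"
proof -
  define u where "u = (\<lambda>w. L \<psi> w / L (\<lambda>_. 1) w)"
  define v where "v = (\<lambda>w. L (\<lambda>y. \<psi> y * g y) w / L g w)"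
  define m M where "m = exp (-\<delta>) * g x" and "M = exp \<delta> * g x"
  have gc: "continuous_on S g" and one: "continuous_on S (\<lambda>_. 1 :: real)"
    using Pcone_continuous[OF g] by auto
  have \<psi>c': "continuous_on S (\<lambda>y. 1 - \<psi> y)" by (intro continuous_intros \<psi>)
  have \<psi>gc: "continuous_on S (\<lambda>y. \<psi> y * g y)" by (intro continuous_intros \<psi> gc)
  have m: "0 < m" using Pcone_pos[OF g x(1)] by (simp add: m_def)
  have mM: "m / M = exp (-2*\<delta>)"
    using Pcone_pos[OF g x(1)] by (simp add: m_def M_def exp_minus field_simps mult_exp_exp)
  have g_bounds: "m \<le> g y \<and> g y \<le> M" if "y \<in> S" for y
    using Pcone_le[OF g x(1) that] Pcone_le[OF g that x(1)]
    by (simp add: m_def M_def exp_minus field_simps)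
  have Lg: "0 < L g w" if "w \<in> S" for w using Pcone_pos[OF maps[OF g] that] .
  have low': "m / M * u x' \<le> v x'"
    unfolding u_def v_def using \<psi> g_bounds m Lg x
    by (intro L_weighted_ratio_ge[OF \<psi>(1) _ gc]) auto
  have "m / M * (L (\<lambda>y. 1 - \<psi> y) x / L (\<lambda>_. 1) x)
        \<le> L (\<lambda>y. (1 - \<psi> y) * g y) x / L g x"
    using \<psi> g_bounds m Lg x by (intro L_weighted_ratio_ge[OF \<psi>c' _ gc]) auto
  moreover have "L (\<lambda>y. 1 - \<psi> y) x = L (\<lambda>_. 1) x - L \<psi> x"
    using L_lincomb[OF one \<psi>(1) \<psi>c' _ x(1), of 1 "-1"] by simp
  moreover have "L (\<lambda>y. (1 - \<psi> y) * g y) x = L g x - L (\<lambda>y. \<psi> y * g y) x"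
    using L_lincomb[OF gc \<psi>gc _ _ x(1), of "\<lambda>y. (1 - \<psi> y) * g y" 1 "-1"] \<psi> gc
    by (simp add: algebra_simps continuous_intros)
  moreover have "0 < L (\<lambda>_. 1) x" "0 < L g x" using L_const_pos Lg x by auto
  ultimately have low: "m / M * (1 - u x) \<le> 1 - v x"
    unfolding u_def v_def by (simp add: diff_divide_distrib)
  have "u x - u x' \<le> 1 - eta" unfolding u_def by (rule unit_ratio_gap[OF \<psi> x])
  then have "m / M * eta \<le> m / M * (1 - u x + u x')"
    using m g_bounds[OF x(1)] by (intro mult_left_mono) auto
  moreover have "m / M * (1 - u x + u x') = m / M * (1 - u x) + m / M * u x'"
    by (simp add: algebra_simps)
  ultimately show ?thesis using low low' unfolding v_def mM[symmetric] by linarith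
qed

lemma L_ratio_oscillation:
  assumes f: "f \<in> Pcone S \<delta>" and g: "g \<in> Pcone S \<delta>"
    and bounds: "\<And>w. w \<in> S \<Longrightarrow> \<alpha> \<le> f w / g w \<and> f w / g w \<le> \<beta>"
    and y: "y \<in> S" and z: "z \<in> S"
  shows "L f y / L g y \<le> L f z / L g z + (\<beta> - \<alpha>) * (1 - exp (-2*\<delta>) * eta)"
proof -
  \<comment> \<open>If \<open>\<alpha> = \<beta>\<close>, then \<open>inverse 0 = 0\<close> makes \<open>\<psi> = 0\<close>, and \<open>f = \<alpha> g\<close> still decomposes.\<close>
  define \<psi> where "\<psi> = (\<lambda>w. inverse (\<beta> - \<alpha>) * (f w / g w - \<alpha>))"
  have fc: "continuous_on S f" and gc: "continuous_on S g" using f g by (auto intro: Pcone_continuous)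
  have gpos: "\<And>w. w \<in> S \<Longrightarrow> 0 < g w" and Lg: "\<And>w. w \<in> S \<Longrightarrow> 0 < L g w"
    using Pcone_pos[OF g] Pcone_pos[OF maps[OF g]] by auto
  have \<alpha>\<beta>: "\<alpha> \<le> \<beta>" using bounds[OF y] by linarith
  have \<psi>c: "continuous_on S \<psi>"
    unfolding \<psi>_def using gpos by (intro continuous_intros fc gc) (auto simp: less_imp_neq[symmetric])
  have scaled: "(\<beta> - \<alpha>) * \<psi> w = f w / g w - \<alpha>" if "w \<in> S" for w
    using bounds[OF that] by (cases "\<alpha> = \<beta>") (auto simp: \<psi>_def)
  have \<psi>_bounds: "0 \<le> \<psi> w \<and> \<psi> w \<le> 1" if "w \<in> S" for w
    using bounds[OF that] \<alpha>\<beta> by (cases "\<alpha> = \<beta>") (auto simp: \<psi>_def field_simps)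
  have split: "L f w = \<alpha> * L g w + (\<beta> - \<alpha>) * L (\<lambda>v. \<psi> v * g v) w" if "w \<in> S" for w
  proof (rule L_lincomb[OF gc _ fc _ that])
    show "continuous_on S (\<lambda>v. \<psi> v * g v)" by (intro continuous_intros \<psi>c gc)
    show "f v = \<alpha> * g v + (\<beta> - \<alpha>) * (\<psi> v * g v)" if "v \<in> S" for v
      using scaled[OF that] gpos[OF that] by (simp add: field_simps)
  qed
  have "L f w / L g w = \<alpha> + (\<beta> - \<alpha>) * (L (\<lambda>v. \<psi> v * g v) w / L g w)" if "w \<in> S" for w
    using split[OF that] Lg[OF that] by (simp add: field_simps)
  moreover have "(\<beta> - \<alpha>) * (L (\<lambda>v. \<psi> v * g v) y / L g y - L (\<lambda>v. \<psi> v * g v) z / L g z)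
                 \<le> (\<beta> - \<alpha>) * (1 - exp (-2*\<delta>) * eta)"
    using weighted_ratio_gap[OF g \<psi>c \<psi>_bounds y z] \<alpha>\<beta> by (intro mult_left_mono) auto
  ultimately show ?thesis using y z by (simp add: algebra_simps)
qed

lemma Theta_L_le:
  assumes ne: "S \<noteq> {}" and f: "f \<in> Pcone S \<delta>" and g: "g \<in> Pcone S \<delta>"
  shows "Theta S (L f) (L g) \<le> (1 - exp (-4*\<delta>) * eta) * Theta S f g"
proof -
  define \<alpha> \<beta> where "\<alpha> = (INF w\<in>S. f w / g w)" and "\<beta> = (SUP w\<in>S. f w / g w)"
  define e R where "e = exp (-2*\<delta>) * eta" and "R = exp (2*\<delta>)"
  define r K where "r = \<beta> / \<alpha>" and "K = 1 + (r - 1) * (1 - e)"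
  have pos: "\<And>w. w \<in> S \<Longrightarrow> 0 < f w / g w" using Pcone_pos[OF f] Pcone_pos[OF g] by simp
  note bounds = ratio_SUP_INF_bounds[OF ne pos Pcone_ratio_le[OF f g]]
  have \<alpha>: "0 < \<alpha>" and \<beta>: "\<beta> \<le> R * \<alpha>" using bounds(3,4) by (simp_all add: \<alpha>_def \<beta>_def R_def)
  have ratio_in: "\<alpha> \<le> f w / g w \<and> f w / g w \<le> \<beta>" if "w \<in> S" for w
    unfolding \<alpha>_def \<beta>_def using bounds(1,2) that by (auto intro: cINF_lower cSUP_upper)
  have e: "0 < e" "e \<le> 1"
    using eta_pos eta_le_1 delta mult_mono[of "exp (-2*\<delta>)" 1 eta 1] by (auto simp: e_def)
  have "\<alpha> \<le> \<beta>" using ratio_in ne by force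
  then have r: "1 \<le> r" "r \<le> R" using \<alpha> \<beta> by (auto simp: r_def divide_le_eq)
  have "L f y / L g y \<le> K * (L f z / L g z)" if y: "y \<in> S" and z: "z \<in> S" for y z
  proof -
    have "\<alpha> \<le> L f z / L g z"
      using ratio_in Pcone_pos[OF g] Pcone_pos[OF maps[OF g] z]
      by (intro L_ratio_ge[OF Pcone_continuous[OF f] Pcone_continuous[OF g] _ z])
        (auto simp: le_divide_eq)
    then have "\<alpha> * ((r - 1) * (1 - e)) \<le> (L f z / L g z) * ((r - 1) * (1 - e))"
      using r e by (intro mult_right_mono) auto
    moreover have "(\<beta> - \<alpha>) * (1 - e) = \<alpha> * ((r - 1) * (1 - e))"
      using \<alpha> by (simp add: r_def field_simps)
    ultimately have "(\<beta> - \<alpha>) * (1 - e) \<le> (L f z / L g z) * ((r - 1) * (1 - e))" by linarith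
    then show ?thesis
      using L_ratio_oscillation[OF f g ratio_in y z] by (simp add: K_def e_def algebra_simps)
  qed
  then have "Theta S (L f) (L g) \<le> ln K"
    using Pcone_pos[OF maps[OF f]] Pcone_pos[OF maps[OF g]] by (intro Theta_le_ln[OF ne]) auto
  also have "\<dots> \<le> (1 - e/R) * ln r" unfolding K_def by (rule ln_contract_le[OF r e])
  also have "e/R = exp (-4*\<delta>) * eta"
    using exp_diff[of "-2*\<delta>" "2*\<delta>"] by (simp add: e_def R_def)
  also have "ln r = Theta S f g" by (simp add: Theta_def r_def \<alpha>_def \<beta>_def)
  finally show ?thesis .
qed

end

theorem lemma5p8:
  fixes k :: nat and A :: "nat \<Rightarrow> nat \<Rightarrow> bool" and \<delta> \<delta>' :: real
    and L :: "((nat \<Rightarrow> nat) \<Rightarrow> real) \<Rightarrow> ((nat \<Rightarrow> nat) \<Rightarrow> real)"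
  assumes nonempty: "SFT k A \<noteq> {}"
    and delta: "0 < \<delta>'" "\<delta>' < \<delta>"
    and cont: "\<And>f. continuous_on (SFT k A) f \<Longrightarrow> continuous_on (SFT k A) (L f)"
    and lin: "\<And>f g a b. continuous_on (SFT k A) f \<Longrightarrow> continuous_on (SFT k A) g \<Longrightarrow>
               \<forall>x\<in>SFT k A. L (\<lambda>y. a * f y + b * g y) x = a * L f x + b * L g x"
    and pos: "\<And>g. continuous_on (SFT k A) g \<Longrightarrow> (\<forall>x\<in>SFT k A. 0 \<le> g x) \<Longrightarrow>
               \<forall>x\<in>SFT k A. 0 \<le> L g x"
    and maps: "\<And>g. g \<in> Pcone (SFT k A) \<delta> \<Longrightarrow> L g \<in> Pcone (SFT k A) \<delta>'"
  shows "\<exists>\<kappa><1. \<forall>f\<in>Pcone (SFT k A) \<delta>. \<forall>g\<in>Pcone (SFT k A) \<delta>.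
           Theta (SFT k A) (L f) (L g) \<le> \<kappa> * Theta (SFT k A) f g"
proof -
  interpret Pcone_mapping_operator "SFT k A" L \<delta> \<delta>'
    using delta lin pos maps by unfold_locales auto
  show ?thesis
    using eta_pos Theta_L_le[OF nonempty] by (intro exI[of _ "1 - exp (-4*\<delta>) * eta"]) auto
qed

end
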